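(* Let $a\in(0,1)$, $b>0$, $m\in\mathbb{R}$, and for $t\in(0,1)$ let \[ G_m(t)=F(1-a,b;2b+1;t)-(1-t)^{1-m}F(1-a,b+1;2b+1;t). \] Let $m_0=\frac{a+2b}{1+2b}$ and define \[ E^+=\{m\le m_0\}\cap\Bigl(\{a+b\ge1>m\}\cup\{m<a+b<1\}\cup\{m=a+b\le\tfrac12\}\Bigr), \] \[ E^-=\{m\ge m_0\}\cap\Bigl(\{a+b\ge1,\ m\ge1\}\cup\{\tfrac12\le m=a+b<1\}\cup\{a+b<1,\ a+b<m\}\Bigr), \] as sets of triples $(a,b,m)$. (i) If $G_m(t)\ge0$ for all $t\in(0,1)$, then $(a,b,m)\in E^+$. (ii) If $G_m(t)\le0$ for all $t\in(0,1)$, then $(a,b,m)\in E^-$.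
   Context: For real $a,b,c$ with $c\notin\{0,-1,-2,\dots\}$, $F(a,b;c;x)=\sum_{n\ge0}\frac{(a)_n(b)_n}{(c)_n}\frac{x^n}{n!}$ for $x\in(-1,1)$, where $(a)_0=1$ and $(a)_n=a(a+1)\cdots(a+n-1)$. *)

theory Defs
  imports "HOL-Analysis.Analysis"
begin

text \<open>Gauss hypergeometric series F(a,b;c;x) = sum_n (a)_n (b)_n / (c)_n x^n / n!,
  used for x in (-1,1) and c not a nonpositive integer.\<close>
definition hyp2F1 :: "real \<Rightarrow> real \<Rightarrow> real \<Rightarrow> real \<Rightarrow> real" where
  "hyp2F1 a b c x = (\<Sum>n. pochhammer a n * pochhammer b n / pochhammer c n * x ^ n / fact n)"

definition G :: "real \<Rightarrow> real \<Rightarrow> real \<Rightarrow> real \<Rightarrow> real" where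
  "G a b m t = hyp2F1 (1 - a) b (2*b + 1) t
              - (1 - t) powr (1 - m) * hyp2F1 (1 - a) (b + 1) (2*b + 1) t"

definition m0 :: "real \<Rightarrow> real \<Rightarrow> real" where
  "m0 a b = (a + 2*b) / (1 + 2*b)"

definition Eplus :: "(real \<times> real \<times> real) set" where
  "Eplus = {(a,b,m). m \<le> m0 a b \<and>
      ((a + b \<ge> 1 \<and> 1 > m) \<or> (m < a + b \<and> a + b < 1) \<or> (m = a + b \<and> a + b \<le> 1/2))}"

definition Eminus :: "(real \<times> real \<times> real) set" where
  "Eminus = {(a,b,m). m \<ge> m0 a b \<and>
      ((a + b \<ge> 1 \<and> m \<ge> 1) \<or> (1/2 \<le> m \<and> m = a + b \<and> a + b < 1) \<or> (a + b < 1 \<and> a + b < m))}"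

end

theory Submission
  imports Defs
begin

text \<open>
  Both implications are read off at the two ends of the interval. At \<open>t = 0\<close> the function
  \<open>G\<close> vanishes with slope \<open>m0 - m\<close>, which forces \<open>m \<le> m0\<close> (resp. \<open>m \<ge> m0\<close>).
  Near \<open>t = 1\<close> we compare, via the ratios of consecutive coefficients, the series
  \<open>F(p,q;r;t)\<close> with binomial series \<open>(1 - t)^(-s) = F(s,1;1;t)\<close>: one gets
  \<open>F(p,q;r;t) = O((1 - t)^(-\<sigma>))\<close> for every \<open>\<sigma> > max 0 (p + q - r)\<close>, and
  \<open>F(p,q;r;t) \<ge> (1 - t)^(r - p - q)\<close> if \<open>r < p + q\<close> and \<open>(r - p)(r - q) \<ge> 0\<close>.
  So for \<open>a + b < min 1 m\<close> the subtracted term of \<open>G\<close> blows up faster than the first one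
  and \<open>G < 0\<close> near 1, whereas for \<open>m < min 1 (a + b)\<close> it tends to 0 while the first term
  stays \<open>\<ge> 1\<close>, so \<open>G > 0\<close> near 1. The rest is elementary, using \<open>m0 < 1\<close> and
  \<open>m0 \<le> a + b \<longleftrightarrow> 1/2 \<le> a + b\<close>.
\<close>

lemma le_Max_ratio_mult:
  fixes f g :: "nat \<Rightarrow> real"
  assumes pos: "\<And>n. 0 < g n"
    and step: "\<And>n. N \<le> n \<Longrightarrow> f (Suc n) * g n \<le> f n * g (Suc n)"
  shows "f n \<le> Max ((\<lambda>k. f k / g k) ` {..N}) * g n"
proof -
  define M where "M = Max ((\<lambda>k. f k / g k) ` {..N})"
  have "f n / g n \<le> M"
  proof (induction n)
    case 0
    show ?case unfolding M_def by (intro Max_ge) auto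
  next
    case (Suc n)
    show ?case
    proof (cases "Suc n \<le> N")
      case True
      then show ?thesis unfolding M_def by (intro Max_ge) auto
    next
      case False
      then have "f (Suc n) / g (Suc n) \<le> f n / g n"
        using step[of n] pos[of n] pos[of "Suc n"] by (simp add: divide_simps mult.commute)
      with Suc.IH show ?thesis by linarith
    qed
  qed
  with pos[of n] show ?thesis unfolding M_def by (simp add: divide_le_eq)
qed

lemma eventually_at_right_gt_if_deriv_pos:
  fixes f :: "real \<Rightarrow> real"
  assumes "(f has_field_derivative D) (at x)" "0 < D"
  shows "eventually (\<lambda>t. f x < f t) (at_right x)"
proof -
  obtain d where d: "0 < d" "\<And>h. 0 < h \<Longrightarrow> h < d \<Longrightarrow> f x < f (x + h)"
    using DERIV_pos_inc_right[OF assms] by blast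
  then show ?thesis
    unfolding eventually_at_right_field
    by (intro exI[of _ "x + d"]) (auto intro: d(2)[of "y - x" for y, simplified])
qed

lemma eventually_at_right_lt_if_deriv_neg:
  fixes f :: "real \<Rightarrow> real"
  assumes "(f has_field_derivative D) (at x)" "D < 0"
  shows "eventually (\<lambda>t. f t < f x) (at_right x)"
  using eventually_at_right_gt_if_deriv_pos[of "\<lambda>t. - f t" "- D" x] assms
  by (simp add: DERIV_minus)

lemma ex_unit_interval_if_eventually_at_right_0:
  assumes "eventually P (at_right (0::real))"
  shows "\<exists>t. 0 < t \<and> t < 1 \<and> P t"
  using eventually_happens'[OF _ eventually_conj[OF eventually_at_right_real[of 0 1] assms]] by auto

lemma ex_unit_interval_if_eventually_at_left_1:
  assumes "eventually P (at_left (1::real))"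
  shows "\<exists>t. 0 < t \<and> t < 1 \<and> P t"
  using eventually_happens'[OF _ eventually_conj[OF eventually_at_left_real[of 0 1] assms]] by auto

lemma tendsto_one_minus_powr_at_left_1:
  assumes "0 < \<delta>"
  shows "((\<lambda>t. (1 - t) powr \<delta>) \<longlongrightarrow> 0) (at_left (1::real))"
proof (rule tendsto_zero_powrI)
  show "((\<lambda>t. 1 - t) \<longlongrightarrow> 0) (at_left (1::real))"
    by (intro tendsto_eq_intros) auto
  show "eventually (\<lambda>t. 0 \<le> 1 - t) (at_left (1::real))"
    using eventually_at_left_real[OF zero_less_one] by (rule eventually_mono) simp
qed (use assms in auto)

lemma filterlim_one_minus_powr_neg_at_left_1:
  assumes "0 < \<delta>"
  shows "filterlim (\<lambda>t. (1 - t) powr (- \<delta>)) at_top (at_left (1::real))"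
proof -
  have "filterlim (\<lambda>t. inverse ((1 - t) powr \<delta>)) at_top (at_left (1::real))"
    using tendsto_one_minus_powr_at_left_1[OF assms] eventually_at_left_real[OF zero_less_one]
    by (intro filterlim_inverse_at_top) (auto elim: eventually_mono)
  then show ?thesis
    by (simp add: powr_minus)
qed

definition hyp2F1_coeff :: "real \<Rightarrow> real \<Rightarrow> real \<Rightarrow> nat \<Rightarrow> real" where
  "hyp2F1_coeff p q r n = pochhammer p n * pochhammer q n / pochhammer r n / fact n"

lemma hyp2F1_eq_suminf: "hyp2F1 p q r x = (\<Sum>n. hyp2F1_coeff p q r n * x ^ n)"
  unfolding hyp2F1_def hyp2F1_coeff_def by (simp add: algebra_simps)

lemma hyp2F1_coeff_0 [simp]: "hyp2F1_coeff p q r 0 = 1"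
  by (simp add: hyp2F1_coeff_def)

lemma hyp2F1_coeff_Suc:
  assumes "0 < r"
  shows "hyp2F1_coeff p q r (Suc n) =
           hyp2F1_coeff p q r n * ((p + n) * (q + n) / ((r + n) * (n + 1)))"
proof -
  have "pochhammer r n \<noteq> 0" "r + n \<noteq> 0"
    using assms by (auto simp: pochhammer_eq_0_iff add_pos_nonneg intro!: less_imp_neq[symmetric])
  then show ?thesis
    unfolding hyp2F1_coeff_def pochhammer_Suc fact_Suc by (simp add: field_simps)
qed

lemma hyp2F1_coeff_pos: "0 < p \<Longrightarrow> 0 < q \<Longrightarrow> 0 < r \<Longrightarrow> 0 < hyp2F1_coeff p q r n"
  by (simp add: hyp2F1_coeff_def pochhammer_pos)

lemma sums_binomial_series:
  assumes "\<bar>t\<bar> < 1"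
  shows "(\<lambda>n. hyp2F1_coeff s 1 1 n * t ^ n) sums (1 - t) powr (- s)"
proof -
  have "(\<lambda>n. ((- s) gchoose n) * (- t) ^ n) sums (1 + (- t)) powr (- s)"
    by (rule gen_binomial_real) (use assms in simp)
  moreover have "((- s) gchoose n) * (- t) ^ n = hyp2F1_coeff s 1 1 n * t ^ n" for n
    unfolding gbinomial_pochhammer hyp2F1_coeff_def pochhammer_fact[symmetric]
    by (simp add: power_minus' field_simps)
  ultimately show ?thesis by simp
qed

lemma hyp2F1_coeff_ratio_le:
  assumes "0 < p" "0 < q" "0 < r" "0 < p'" "0 < q'" "0 < r'"
    and "(p + n) * (q + n) * (r' + n) \<le> (p' + n) * (q' + n) * (r + n)"
  shows "hyp2F1_coeff p q r (Suc n) * hyp2F1_coeff p' q' r' n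
           \<le> hyp2F1_coeff p q r n * hyp2F1_coeff p' q' r' (Suc n)"
proof -
  have "(p + n) * (q + n) / ((r + n) * (n + 1)) \<le> (p' + n) * (q' + n) / ((r' + n) * (n + 1))"
    using assms by (simp add: divide_simps add_pos_nonneg)
  then have "hyp2F1_coeff p q r n * hyp2F1_coeff p' q' r' n * ((p + n) * (q + n) / ((r + n) * (n + 1)))
      \<le> hyp2F1_coeff p q r n * hyp2F1_coeff p' q' r' n * ((p' + n) * (q' + n) / ((r' + n) * (n + 1)))"
    using assms by (intro mult_left_mono) (simp_all add: hyp2F1_coeff_pos less_imp_le)
  then show ?thesis
    using assms by (simp add: hyp2F1_coeff_Suc ac_simps)
qed

lemma hyp2F1_coeff_le_binomial:
  assumes "0 < p" "0 < q" "0 < r" "0 < \<sigma>" "p + q < r + \<sigma>"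
  shows "\<exists>M. \<forall>n. hyp2F1_coeff p q r n \<le> M * hyp2F1_coeff \<sigma> 1 1 n"
proof -
  obtain N :: nat where N: "p * q / (r + \<sigma> - p - q) \<le> N"
    by (meson real_arch_simple)
  have "(p + n) * (q + n) * (1 + n) \<le> (\<sigma> + n) * (1 + n) * (r + n)" if "N \<le> n" for n
  proof -
    have "p * q / (r + \<sigma> - p - q) \<le> n"
      using N that by (meson of_nat_le_iff order_trans)
    then have "p * q \<le> n * (r + \<sigma> - p - q)"
      using assms by (simp add: divide_le_eq mult.commute)
    moreover have "0 < \<sigma> * r"
      using assms by simp
    ultimately have "(p + n) * (q + n) \<le> (\<sigma> + n) * (r + n)"
      by (simp add: algebra_simps)
    then show ?thesis
      by (simp add: mult_right_mono mult.commute mult.left_commute)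
  qed
  then have "hyp2F1_coeff p q r n
      \<le> Max ((\<lambda>k. hyp2F1_coeff p q r k / hyp2F1_coeff \<sigma> 1 1 k) ` {..N}) * hyp2F1_coeff \<sigma> 1 1 n" for n
    using assms by (intro le_Max_ratio_mult) (simp_all add: hyp2F1_coeff_pos hyp2F1_coeff_ratio_le)
  then show ?thesis
    by blast
qed

lemma binomial_le_hyp2F1_coeff:
  assumes "0 < p" "0 < q" "0 < r" "r < p + q" "0 \<le> (r - p) * (r - q)"
  shows "hyp2F1_coeff (p + q - r) 1 1 n \<le> hyp2F1_coeff p q r n"
proof -
  have "(p + q - r + k) * (1 + k) * (r + k) \<le> (p + k) * (q + k) * (1 + k)" for k :: nat
  proof -
    have "(p + q - r + k) * (r + k) \<le> (p + k) * (q + k)"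
      \<comment> \<open>the difference is \<open>(r - p) * (r - q)\<close>\<close>
      using assms by (simp add: algebra_simps)
    then show ?thesis
      by (simp add: mult_right_mono mult.commute mult.left_commute)
  qed
  then show ?thesis
    using le_Max_ratio_mult[of "hyp2F1_coeff p q r" 0 "hyp2F1_coeff (p + q - r) 1 1" n] assms
    by (simp add: hyp2F1_coeff_pos hyp2F1_coeff_ratio_le)
qed

lemma hyp2F1_le_powr:
  assumes "0 < p" "0 < q" "0 < r" "0 < \<sigma>" "p + q < r + \<sigma>"
  shows "\<exists>K. \<forall>t. 0 \<le> t \<and> t < 1 \<longrightarrow>
           summable (\<lambda>n. hyp2F1_coeff p q r n * t ^ n) \<and> hyp2F1 p q r t \<le> K * (1 - t) powr (- \<sigma>)"
proof -
  obtain M where M: "\<And>n. hyp2F1_coeff p q r n \<le> M * hyp2F1_coeff \<sigma> 1 1 n"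
    using hyp2F1_coeff_le_binomial[OF assms] by blast
  have majorant: "(\<lambda>n. M * (hyp2F1_coeff \<sigma> 1 1 n * t ^ n)) sums (M * (1 - t) powr (- \<sigma>))"
    and le: "hyp2F1_coeff p q r n * t ^ n \<le> M * (hyp2F1_coeff \<sigma> 1 1 n * t ^ n)"
    if "0 \<le> t" "t < 1" for t n
    using sums_mult[OF sums_binomial_series] M[of n] that
    by (auto simp: mult.assoc[symmetric] mult_right_mono)
  have summable: "summable (\<lambda>n. hyp2F1_coeff p q r n * t ^ n)" if "0 \<le> t" "t < 1" for t
    using that assms
    by (intro summable_comparison_test[OF _ sums_summable[OF majorant]])
       (auto simp: le less_imp_le[OF hyp2F1_coeff_pos])
  show ?thesis
  proof (intro exI allI impI conjI)
    fix t :: real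
    assume "0 \<le> t \<and> t < 1"
    then have t: "0 \<le> t" "t < 1"
      by auto
    then show "summable (\<lambda>n. hyp2F1_coeff p q r n * t ^ n)"
      by (rule summable)
    show "hyp2F1 p q r t \<le> M * (1 - t) powr (- \<sigma>)"
      unfolding hyp2F1_eq_suminf sums_unique[OF majorant[OF t]]
      using t by (intro suminf_le le summable sums_summable[OF majorant])
  qed
qed

lemma summable_hyp2F1:
  assumes "0 < p" "0 < q" "0 < r" "0 \<le> t" "t < 1"
  shows "summable (\<lambda>n. hyp2F1_coeff p q r n * t ^ n)"
proof -
  have "p + q < r + (p + q)"
    using assms by simp
  then show ?thesis
    using hyp2F1_le_powr[of p q r "p + q"] assms by auto
qed

lemma powr_le_hyp2F1:
  assumes "0 < p" "0 < q" "0 < r" "r < p + q" "0 \<le> (r - p) * (r - q)" "0 \<le> t" "t < 1"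
  shows "(1 - t) powr (- (p + q - r)) \<le> hyp2F1 p q r t"
proof (rule sums_le)
  show "(\<lambda>n. hyp2F1_coeff (p + q - r) 1 1 n * t ^ n) sums (1 - t) powr (- (p + q - r))"
    using assms by (intro sums_binomial_series) simp
  show "(\<lambda>n. hyp2F1_coeff p q r n * t ^ n) sums hyp2F1 p q r t"
    unfolding hyp2F1_eq_suminf using assms by (intro summable_sums summable_hyp2F1)
  show "hyp2F1_coeff (p + q - r) 1 1 n * t ^ n \<le> hyp2F1_coeff p q r n * t ^ n" for n
    using binomial_le_hyp2F1_coeff[OF assms(1-5)] assms by (simp add: mult_right_mono)
qed

lemma one_le_hyp2F1:
  assumes "0 < p" "0 < q" "0 < r" "0 \<le> t" "t < 1"
  shows "1 \<le> hyp2F1 p q r t"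
  using sum_le_suminf[OF summable_hyp2F1[OF assms], of "{0}"] assms
  unfolding hyp2F1_eq_suminf by (simp add: less_imp_le[OF hyp2F1_coeff_pos])

lemma hyp2F1_0 [simp]: "hyp2F1 p q r 0 = 1"
  unfolding hyp2F1_eq_suminf by simp

lemma has_field_derivative_hyp2F1_0:
  assumes "0 < p" "0 < q" "0 < r"
  shows "(hyp2F1 p q r has_field_derivative p * q / r) (at 0)"
proof -
  have "summable (\<lambda>n. hyp2F1_coeff p q r n * (1 / 2) ^ n)"
    using assms by (intro summable_hyp2F1) auto
  then have "((\<lambda>x. \<Sum>n. hyp2F1_coeff p q r n * x ^ n) has_field_derivative
      (\<Sum>n. diffs (hyp2F1_coeff p q r) n * 0 ^ n)) (at 0)"
    by (rule termdiffs_strong) simp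
  moreover have "(\<Sum>n. diffs (hyp2F1_coeff p q r) n * 0 ^ n) = p * q / r"
    using hyp2F1_coeff_Suc[OF \<open>0 < r\<close>, of p q 0] by (simp add: diffs_def)
  ultimately show ?thesis
    unfolding hyp2F1_eq_suminf[abs_def] by simp
qed

lemma G_0 [simp]: "G a b m 0 = 0"
  by (simp add: G_def)

lemma has_field_derivative_G_0:
  assumes "a < 1" "0 < b"
  shows "(G a b m has_field_derivative m0 a b - m) (at 0)"
proof -
  have F1: "(hyp2F1 (1 - a) b (2 * b + 1) has_field_derivative (1 - a) * b / (2 * b + 1)) (at 0)"
    and F2: "(hyp2F1 (1 - a) (b + 1) (2 * b + 1) has_field_derivative
               (1 - a) * (b + 1) / (2 * b + 1)) (at 0)"
    using assms by (intro has_field_derivative_hyp2F1_0; simp)+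
  have P: "((\<lambda>t. (1 - t) powr (1 - m)) has_field_derivative - (1 - m)) (at 0)"
    by (auto intro!: derivative_eq_intros)
  have "(G a b m has_field_derivative (1 - a) * b / (2 * b + 1)
      - (- (1 - m) * hyp2F1 (1 - a) (b + 1) (2 * b + 1) 0
         + (1 - a) * (b + 1) / (2 * b + 1) * (1 - 0) powr (1 - m))) (at 0)"
    unfolding G_def[abs_def] by (intro DERIV_diff DERIV_mult F1 F2 P)
  also have "(1 - a) * b / (2 * b + 1)
      - (- (1 - m) * hyp2F1 (1 - a) (b + 1) (2 * b + 1) 0
         + (1 - a) * (b + 1) / (2 * b + 1) * (1 - 0) powr (1 - m)) = m0 a b - m"
    using assms by (simp add: m0_def add_pos_pos divide_simps) (simp add: algebra_simps)
  finally show ?thesis .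
qed

lemma ex_G_pos_near_0:
  assumes "a < 1" "0 < b" "m < m0 a b"
  shows "\<exists>t. 0 < t \<and> t < 1 \<and> 0 < G a b m t"
  using eventually_at_right_gt_if_deriv_pos[OF has_field_derivative_G_0] assms
  by (intro ex_unit_interval_if_eventually_at_right_0) simp

lemma ex_G_neg_near_0:
  assumes "a < 1" "0 < b" "m0 a b < m"
  shows "\<exists>t. 0 < t \<and> t < 1 \<and> G a b m t < 0"
  using eventually_at_right_lt_if_deriv_neg[OF has_field_derivative_G_0] assms
  by (intro ex_unit_interval_if_eventually_at_right_0) simp

lemma ex_G_neg_near_1:
  assumes "0 < a" "0 < b" "a + b < 1" "a + b < m"
  shows "\<exists>t. 0 < t \<and> t < 1 \<and> G a b m t < 0"
proof -
  define \<delta> where "\<delta> = (m - a - b) / 2"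
  have "0 < \<delta>"
    using assms by (simp add: \<delta>_def)
  obtain K where F1: "\<And>t. 0 \<le> t \<Longrightarrow> t < 1 \<Longrightarrow> hyp2F1 (1 - a) b (2 * b + 1) t \<le> K * (1 - t) powr (- \<delta>)"
    using hyp2F1_le_powr[of "1 - a" b "2 * b + 1" \<delta>] assms \<open>0 < \<delta>\<close> by auto
  have near: "eventually (\<lambda>t. K < (1 - t) powr (- \<delta>)) (at_left 1)"
    using filterlim_one_minus_powr_neg_at_left_1[OF \<open>0 < \<delta>\<close>]
    unfolding filterlim_at_top_dense by blast
  have neg: "G a b m t < 0" if "K < (1 - t) powr (- \<delta>)" "0 < t" "t < 1" for t
  proof -
    define x where "x = (1 - t) powr (- \<delta>)"
    have "x * x = (1 - t) powr (1 - m) * (1 - t) powr (- (1 - a - b))"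
      unfolding x_def powr_add[symmetric] by (simp add: \<delta>_def algebra_simps)
    also have "\<dots> \<le> (1 - t) powr (1 - m) * hyp2F1 (1 - a) (b + 1) (2 * b + 1) t"
      using powr_le_hyp2F1[of "1 - a" "b + 1" "2 * b + 1" t] assms that
      by (intro mult_left_mono) (simp_all add: algebra_simps)
    finally have "x * x \<le> (1 - t) powr (1 - m) * hyp2F1 (1 - a) (b + 1) (2 * b + 1) t" .
    moreover have "K * x < x * x"
      using that unfolding x_def by (intro mult_strict_right_mono) auto
    moreover have "hyp2F1 (1 - a) b (2 * b + 1) t \<le> K * x"
      using F1[of t] that unfolding x_def by simp
    ultimately show ?thesis
      unfolding G_def by linarith
  qed
  have "eventually (\<lambda>t. G a b m t < 0) (at_left 1)"
    using eventually_conj[OF near eventually_at_left_real[OF zero_less_one]]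
    by (rule eventually_mono) (auto intro: neg)
  then show ?thesis
    by (rule ex_unit_interval_if_eventually_at_left_1)
qed

lemma ex_G_pos_near_1:
  assumes "0 < a" "a < 1" "0 < b" "m < 1" "m < a + b"
  shows "\<exists>t. 0 < t \<and> t < 1 \<and> 0 < G a b m t"
proof -
  define \<sigma> where "\<sigma> = (max 0 (1 - a - b) + (1 - m)) / 2"
  define \<delta> where "\<delta> = 1 - m - \<sigma>"
  have "0 < \<sigma>" "1 - a - b < \<sigma>" "0 < \<delta>"
    using assms by (auto simp: \<sigma>_def \<delta>_def)
  obtain K where F2: "\<And>t. 0 \<le> t \<Longrightarrow> t < 1 \<Longrightarrow> hyp2F1 (1 - a) (b + 1) (2 * b + 1) t \<le> K * (1 - t) powr (- \<sigma>)"
    using hyp2F1_le_powr[of "1 - a" "b + 1" "2 * b + 1" \<sigma>] assms \<open>1 - a - b < \<sigma>\<close> \<open>0 < \<sigma>\<close> by auto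
  have "((\<lambda>t. K * (1 - t) powr \<delta>) \<longlongrightarrow> 0) (at_left 1)"
    using tendsto_one_minus_powr_at_left_1[OF \<open>0 < \<delta>\<close>] by (rule tendsto_mult_right_zero)
  then have near: "eventually (\<lambda>t. K * (1 - t) powr \<delta> < 1) (at_left 1)"
    by (rule order_tendstoD) simp
  have pos: "0 < G a b m t" if "K * (1 - t) powr \<delta> < 1" "0 < t" "t < 1" for t
  proof -
    have "(1 - t) powr (1 - m) * hyp2F1 (1 - a) (b + 1) (2 * b + 1) t
        \<le> (1 - t) powr (1 - m) * (K * (1 - t) powr (- \<sigma>))"
      using F2[of t] that by (intro mult_left_mono) auto
    also have "\<dots> = K * (1 - t) powr \<delta>"
      unfolding \<delta>_def by (simp add: powr_add[symmetric] algebra_simps)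
    finally show ?thesis
      using one_le_hyp2F1[of "1 - a" b "2 * b + 1" t] assms that unfolding G_def by simp
  qed
  have "eventually (\<lambda>t. 0 < G a b m t) (at_left 1)"
    using eventually_conj[OF near eventually_at_left_real[OF zero_less_one]]
    by (rule eventually_mono) (auto intro: pos)
  then show ?thesis
    by (rule ex_unit_interval_if_eventually_at_left_1)
qed

lemma m0_less_1: "a < 1 \<Longrightarrow> 0 < b \<Longrightarrow> m0 a b < 1"
  by (simp add: m0_def divide_less_eq)

lemma add_le_m0_iff:
  assumes "0 < b"
  shows "a + b \<le> m0 a b \<longleftrightarrow> a + b \<le> 1 / 2"
proof -
  have "a + b \<le> m0 a b \<longleftrightarrow> 0 \<le> b * (1 - 2 * (a + b))"
    using assms by (simp add: m0_def le_divide_eq algebra_simps)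
  also have "\<dots> \<longleftrightarrow> a + b \<le> 1 / 2"
    using assms by (auto simp: zero_le_mult_iff)
  finally show ?thesis .
qed

lemma m0_le_add_iff:
  assumes "0 < b"
  shows "m0 a b \<le> a + b \<longleftrightarrow> 1 / 2 \<le> a + b"
proof -
  have "m0 a b \<le> a + b \<longleftrightarrow> b * (1 - 2 * (a + b)) \<le> 0"
    using assms by (simp add: m0_def divide_le_eq algebra_simps)
  also have "\<dots> \<longleftrightarrow> 1 / 2 \<le> a + b"
    using assms by (auto simp: mult_le_0_iff)
  finally show ?thesis .
qed

lemma mem_Eplus:
  assumes "a < 1" "0 < b" "m \<le> m0 a b" "a + b < 1 \<Longrightarrow> m \<le> a + b"
  shows "(a, b, m) \<in> Eplus"
  using assms m0_less_1[of a b] add_le_m0_iff[of b a] unfolding Eplus_def by auto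

lemma mem_Eminus:
  assumes "0 < b" "m0 a b \<le> m" "m < 1 \<Longrightarrow> a + b \<le> m"
  shows "(a, b, m) \<in> Eminus"
  using assms m0_le_add_iff[of b a] unfolding Eminus_def by auto

theorem lemma4:
  fixes a b m :: real
  assumes "0 < a" and "a < 1" and "b > 0"
  shows "((\<forall>t. 0 < t \<and> t < 1 \<longrightarrow> G a b m t \<ge> 0) \<longrightarrow> (a, b, m) \<in> Eplus)
       \<and> ((\<forall>t. 0 < t \<and> t < 1 \<longrightarrow> G a b m t \<le> 0) \<longrightarrow> (a, b, m) \<in> Eminus)"
proof (intro conjI impI)
  assume nonneg: "\<forall>t. 0 < t \<and> t < 1 \<longrightarrow> G a b m t \<ge> 0"
  have "m \<le> m0 a b"
    using ex_G_neg_near_0[of a b m] nonneg assms by force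
  moreover have "m \<le> a + b" if "a + b < 1"
    using ex_G_neg_near_1[of a b m] nonneg assms that by force
  ultimately show "(a, b, m) \<in> Eplus"
    using assms by (intro mem_Eplus)
next
  assume nonpos: "\<forall>t. 0 < t \<and> t < 1 \<longrightarrow> G a b m t \<le> 0"
  have "m0 a b \<le> m"
    using ex_G_pos_near_0[of a b m] nonpos assms by force
  moreover have "a + b \<le> m" if "m < 1"
    using ex_G_pos_near_1[of a b m] nonpos assms that by force
  ultimately show "(a, b, m) \<in> Eminus"
    using assms by (intro mem_Eminus)
qed

end
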